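(* For the propositional CNF formula $MAP_n^1$ (defined in the context), every resolution refutation of $MAP_n^1$ has size exponential in $n$.
   Context: MAP planning domain. Fix $n\ge 2$. The map is an undirected graph with $3n-3$ nodes: a centre $L^0$; a path (branch 1) $L^0 - L_1^1 - L_1^2 - \dots - L_1^{2n-3}$; and, for each $i=2,\dots,n$, a single node $L_i^1$ adjacent to $L^0$. Facts are $at\text{-}x$ and $visited\text{-}x$ for nodes $x$. For every edge $\{x,y\}$ and both orientations there is an action $move\text{-}x\text{-}y$ with precondition $\{at\text{-}x\}$, add effects $\{at\text{-}y, visited\text{-}y\}$ and delete effect $\{at\text{-}x\}$. The initial state is $\{at\text{-}L^0\}$. For $k\in\{1,3,\dots,2n-3\}$ the goal of task $MAP_n^k$ is: for $k=1$, $\{visited\text{-}L_1^1,\dots,visited\text{-}L_n^1\}$; each increase of $k$ by 2 moves the branch-1 goal two steps further out along branch 1 (the goal becomes $visited\text{-}L_1^k$) and drops one of the goals $visited\text{-}L_i^1$, $i\ge 2$; for $k=2n-3$ the goal is $\{visited\text{-}L_1^{2n-3}, visited\text{-}L_2^1\}$. The CNF formula $MAP_n^k$ is the standard Graphplan-based (Blackbox-style) SAT encoding of task $MAP_n^k$ with $T=2n-2$ time steps (one fewer than the length $2n-1$ of a shortest plan, so the formula is unsatisfiable). Build the Graphplan planning graph from the initial state, with a NOOP action $NOOP\text{-}p$ (precondition $\{p\}$, add $\{p\}$) for every fact $p$. For each time step $t=1,\dots,T$ there is a Boolean variable $a(t)$ for every action $a$ (including NOOPs) present in action layer $t$ of the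 planning graph. Clauses: (i) goal clauses: for each goal fact $g$, the clause $\{a(T): g\in add(a)\}$; (ii) precondition clauses: for each variable $a(t)$ with $t\ge 2$ and each $p\in pre(a)$, the clause $\{\neg a(t)\}\cup\{a'(t-1): p\in add(a')\}$; (iii) mutex clauses $\{\neg a(t),\neg a'(t)\}$ for each pair of actions that Graphplan marks mutually exclusive at layer $t$ (interference: one deletes a precondition or add effect of the other; or competing needs: mutually exclusive preconditions). In this encoding any two move actions at the same time step are mutually exclusive. A resolution refutation is a derivation of the empty clause by the resolution rule; its size is the number of clauses in it. *)

theory Defs
  imports Complex_Main
begin

record ('f, 'a) strips =
  acts  :: "'a set"            (* all actions, NOOPs included *)
  pre   :: "'a \<Rightarrow> 'f set"
  adds  :: "'a \<Rightarrow> 'f set"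
  dels  :: "'a \<Rightarrow> 'f set"
  init  :: "'f set"
  goal  :: "'f set"

definition act_layer :: "('f,'a) strips \<Rightarrow> 'f set \<Rightarrow> ('f \<times> 'f) set \<Rightarrow> 'a set" where
  "act_layer P F M = {a \<in> acts P. pre P a \<subseteq> F \<and> (\<forall>p\<in>pre P a. \<forall>q\<in>pre P a. (p, q) \<notin> M)}"

definition interfere :: "('f,'a) strips \<Rightarrow> 'a \<Rightarrow> 'a \<Rightarrow> bool" where
  "interfere P a b \<longleftrightarrow>
     dels P a \<inter> (pre P b \<union> adds P b) \<noteq> {} \<or> dels P b \<inter> (pre P a \<union> adds P a) \<noteq> {}"

definition act_mutex :: "('f,'a) strips \<Rightarrow> ('f \<times> 'f) set \<Rightarrow> 'a \<Rightarrow> 'a \<Rightarrow> bool" where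
  "act_mutex P M a b \<longleftrightarrow> a \<noteq> b \<and>
     (interfere P a b \<or> (\<exists>p\<in>pre P a. \<exists>q\<in>pre P b. (p, q) \<in> M))"

fun fact_layer :: "('f,'a) strips \<Rightarrow> nat \<Rightarrow> 'f set \<times> ('f \<times> 'f) set" where
  "fact_layer P 0 = (init P, {})"
| "fact_layer P (Suc t) =
     (let F = fst (fact_layer P t); M = snd (fact_layer P t); A = act_layer P F M;
          F' = \<Union> (adds P ` A)
      in (F', {(p, q). p \<in> F' \<and> q \<in> F' \<and>
                 (\<forall>a\<in>A. \<forall>b\<in>A. p \<in> adds P a \<longrightarrow> q \<in> adds P b \<longrightarrow> act_mutex P M a b)}))"

definition actions_at :: "('f,'a) strips \<Rightarrow> nat \<Rightarrow> 'a set" where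
  "actions_at P t = act_layer P (fst (fact_layer P (t - 1))) (snd (fact_layer P (t - 1)))"

definition mutex_at :: "('f,'a) strips \<Rightarrow> nat \<Rightarrow> 'a \<Rightarrow> 'a \<Rightarrow> bool" where
  "mutex_at P t a b = act_mutex P (snd (fact_layer P (t - 1))) a b"

datatype 'v lit = Pos 'v | Neg 'v

fun negate :: "'v lit \<Rightarrow> 'v lit" where
  "negate (Pos v) = Neg v"
| "negate (Neg v) = Pos v"

type_synonym 'v clause = "'v lit set"

text \<open>The Blackbox-style encoding with T time steps; variable (a, t) stands for a(t).\<close>
definition graphplan_cnf :: "('f,'a) strips \<Rightarrow> nat \<Rightarrow> ('a \<times> nat) clause set" where
  "graphplan_cnf P T =
     {{Pos (a, T) | a. a \<in> actions_at P T \<and> g \<in> adds P a} | g. g \<in> goal P}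
   \<union> {insert (Neg (a, t)) {Pos (a', t - 1) | a'. a' \<in> actions_at P (t - 1) \<and> p \<in> adds P a'}
       | a t p. 2 \<le> t \<and> t \<le> T \<and> a \<in> actions_at P t \<and> p \<in> pre P a}
   \<union> {{Neg (a, t), Neg (b, t)} | a b t. 1 \<le> t \<and> t \<le> T \<and> a \<in> actions_at P t \<and>
        b \<in> actions_at P t \<and> mutex_at P t a b}"

definition resolvent :: "'v clause \<Rightarrow> 'v clause \<Rightarrow> 'v clause \<Rightarrow> bool" where
  "resolvent C D E \<longleftrightarrow> (\<exists>l. l \<in> C \<and> negate l \<in> D \<and> E = (C - {l}) \<union> (D - {negate l}))"

text \<open>A resolution refutation: a sequence of clauses, each an input clause or a resolvent
  of two earlier ones, ending with the empty clause. Its size is its length.\<close>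
definition refutation :: "'v clause set \<Rightarrow> 'v clause list \<Rightarrow> bool" where
  "refutation F R \<longleftrightarrow> R \<noteq> [] \<and> last R = {} \<and>
     (\<forall>i < length R. R ! i \<in> F \<or> (\<exists>j < i. \<exists>k < i. resolvent (R ! j) (R ! k) (R ! i)))"

text \<open>L0 is the centre; L i j is node L_i^j (branch i, depth j).\<close>
datatype node = L0 | L nat nat

datatype fact = At node | Visited node

datatype action = Move node node | Noop fact

definition map_nodes :: "nat \<Rightarrow> node set" where
  "map_nodes n = {L0} \<union> {L 1 j | j. 1 \<le> j \<and> j \<le> 2 * n - 3} \<union> {L i 1 | i. 2 \<le> i \<and> i \<le> n}"

definition map_adj0 :: "nat \<Rightarrow> node \<Rightarrow> node \<Rightarrow> bool" where
  "map_adj0 n x y \<longleftrightarrow>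
     (x = L0 \<and> (\<exists>i. 1 \<le> i \<and> i \<le> n \<and> y = L i 1)) \<or>
     (\<exists>j. 1 \<le> j \<and> j + 1 \<le> 2 * n - 3 \<and> x = L 1 j \<and> y = L 1 (j + 1))"

definition map_edge :: "nat \<Rightarrow> node \<Rightarrow> node \<Rightarrow> bool" where
  "map_edge n x y \<longleftrightarrow> map_adj0 n x y \<or> map_adj0 n y x"

definition map_facts :: "nat \<Rightarrow> fact set" where
  "map_facts n = {At x | x. x \<in> map_nodes n} \<union> {Visited x | x. x \<in> map_nodes n}"

fun map_pre :: "action \<Rightarrow> fact set" where
  "map_pre (Move x y) = {At x}"
| "map_pre (Noop p) = {p}"

fun map_add :: "action \<Rightarrow> fact set" where
  "map_add (Move x y) = {At y, Visited y}"
| "map_add (Noop p) = {p}"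

fun map_del :: "action \<Rightarrow> fact set" where
  "map_del (Move x y) = {At x}"
| "map_del (Noop p) = {}"

definition map_task1 :: "nat \<Rightarrow> (fact, action) strips" where
  "map_task1 n = \<lparr> acts = {Move x y | x y. map_edge n x y} \<union> {Noop p | p. p \<in> map_facts n},
                  pre = map_pre, adds = map_add, dels = map_del,
                  init = {At L0},
                  goal = {Visited (L i 1) | i. 1 \<le> i \<and> i \<le> n} \<rparr>"

definition MAP1_cnf :: "nat \<Rightarrow> (action \<times> nat) clause set" where
  "MAP1_cnf n = graphplan_cnf (map_task1 n) (2 * n - 2)"

end

theory Submission
  imports Defs
begin

(* A critical assignment lets the walker visit all leaves except a missing leaf i, one leaf per
   round of two time steps, and fakes visited-L_i^1 from some time 2f on. It satisfies every
   clause of MAP_n^1 except the precondition clause of the faking NOOP, so each axiom is falsified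
   by critical assignments with only one missing leaf. Hence the number of missing leaves for
   which a clause is falsified is at most 1 on axioms, subadditive under resolution and maximal on
   the empty clause, and every refutation contains a clause falsified for between a third and two
   thirds of the leaves. Moving a missing leaf into the round of a visited one shows that such a
   clause is satisfied by all critical assignments visiting leaf j in round h, for quadratically
   many pairs (j, h). The same holds for the critical assignments extending any restriction of
   n/40 rounds, so no such restriction makes all these wide clauses true; but a greedy restriction,
   each step of which fixes a pair forcing a twentieth of the remaining wide clauses, would do so
   if there were fewer than (20/19)^(n/40) of them. *)

section \<open>Parallel runs in the planning graph\<close>

lemma parallel_run_in_fact_layer:
  fixes P :: "('f, 'a) strips" and S :: "nat \<Rightarrow> 'a set" and st :: "nat \<Rightarrow> 'f set"
  assumes st0: "st 0 = init P"
    and stS: "\<And>t. st (Suc t) = \<Union> (adds P ` S (Suc t))"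
    and acts: "\<And>t. S (Suc t) \<subseteq> acts P"
    and pre: "\<And>t a. a \<in> S (Suc t) \<Longrightarrow> pre P a \<subseteq> st t"
    and indep: "\<And>t a b. a \<in> S (Suc t) \<Longrightarrow> b \<in> S (Suc t) \<Longrightarrow> a \<noteq> b \<Longrightarrow> \<not> interfere P a b"
  shows "st t \<subseteq> fst (fact_layer P t) \<and> (\<forall>p\<in>st t. \<forall>q\<in>st t. (p, q) \<notin> snd (fact_layer P t))"
proof (induction t)
  case 0
  then show ?case using st0 by simp
next
  case (Suc t)
  define M where "M = snd (fact_layer P t)"
  define A where "A = act_layer P (fst (fact_layer P t)) M"
  have in_A: "S (Suc t) \<subseteq> A"
  proof
    fix a assume a: "a \<in> S (Suc t)"
    then have "pre P a \<subseteq> st t" using pre by blast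
    then show "a \<in> A" unfolding A_def M_def act_layer_def using a acts Suc by blast
  qed
  have no_mutex: "\<not> act_mutex P M a b" if "a \<in> S (Suc t)" "b \<in> S (Suc t)" for a b
  proof -
    have "pre P a \<subseteq> st t" "pre P b \<subseteq> st t" using pre that by auto
    then show ?thesis unfolding act_mutex_def M_def using indep[OF that] Suc by blast
  qed
  have layer: "fact_layer P (Suc t) = (\<Union> (adds P ` A), {(p, q). p \<in> \<Union> (adds P ` A) \<and> q \<in> \<Union> (adds P ` A) \<and>
        (\<forall>a\<in>A. \<forall>b\<in>A. p \<in> adds P a \<longrightarrow> q \<in> adds P b \<longrightarrow> act_mutex P M a b)})"
    by (simp add: A_def M_def Let_def)
  have "st (Suc t) \<subseteq> \<Union> (adds P ` A)" using in_A by (auto simp: stS)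
  moreover have "(p, q) \<notin> snd (fact_layer P (Suc t))" if pq: "p \<in> st (Suc t)" "q \<in> st (Suc t)" for p q
  proof -
    obtain a b where ab: "a \<in> S (Suc t)" "b \<in> S (Suc t)" "p \<in> adds P a" "q \<in> adds P b"
      using pq unfolding stS by blast
    then have "a \<in> A" "b \<in> A" "\<not> act_mutex P M a b" using in_A no_mutex by auto
    then show ?thesis using ab unfolding layer by auto
  qed
  ultimately show ?case by (simp only: layer fst_conv) blast
qed

lemma parallel_run_in_planning_graph:
  fixes P :: "('f, 'a) strips" and S :: "nat \<Rightarrow> 'a set" and st :: "nat \<Rightarrow> 'f set"
  assumes st0: "st 0 = init P"
    and stS: "\<And>t. st (Suc t) = \<Union> (adds P ` S (Suc t))"
    and acts: "\<And>t. S (Suc t) \<subseteq> acts P"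
    and pre: "\<And>t a. a \<in> S (Suc t) \<Longrightarrow> pre P a \<subseteq> st t"
    and indep: "\<And>t a b. a \<in> S (Suc t) \<Longrightarrow> b \<in> S (Suc t) \<Longrightarrow> a \<noteq> b \<Longrightarrow> \<not> interfere P a b"
    and "1 \<le> t" and a: "a \<in> S t" and b: "b \<in> S t"
  shows "a \<in> actions_at P t \<and> \<not> mutex_at P t a b"
proof -
  obtain u where u: "t = Suc u" using \<open>1 \<le> t\<close> by (cases t) auto
  have layer: "st u \<subseteq> fst (fact_layer P u) \<and> (\<forall>p\<in>st u. \<forall>q\<in>st u. (p, q) \<notin> snd (fact_layer P u))"
    by (rule parallel_run_in_fact_layer[OF st0 stS acts pre indep])
  have pre_ab: "pre P a \<subseteq> st u" "pre P b \<subseteq> st u" using pre a b u by auto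
  have "a \<in> actions_at P t"
    using u pre_ab layer a acts unfolding actions_at_def act_layer_def by auto blast
  moreover have "\<not> mutex_at P t a b"
    using u pre_ab layer a b indep unfolding mutex_at_def act_mutex_def by fastforce
  ultimately show ?thesis ..
qed

section \<open>Resolution under a valuation\<close>

fun lit_true :: "('v \<Rightarrow> bool) \<Rightarrow> 'v lit \<Rightarrow> bool" where
  "lit_true \<alpha> (Pos v) = \<alpha> v"
| "lit_true \<alpha> (Neg v) = (\<not> \<alpha> v)"

definition clause_true :: "('v \<Rightarrow> bool) \<Rightarrow> 'v clause \<Rightarrow> bool" where
  "clause_true \<alpha> C \<longleftrightarrow> (\<exists>l\<in>C. lit_true \<alpha> l)"

lemma lit_true_negate [simp]: "lit_true \<alpha> (negate l) \<longleftrightarrow> \<not> lit_true \<alpha> l"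
  by (cases l) auto

lemma clause_true_resolvent:
  assumes "resolvent C D E" "clause_true \<alpha> C" "clause_true \<alpha> D"
  shows "clause_true \<alpha> E"
proof -
  obtain l where "l \<in> C" "negate l \<in> D" "E = (C - {l}) \<union> (D - {negate l})"
    using assms(1) unfolding resolvent_def by blast
  then show ?thesis
    using assms(2,3) unfolding clause_true_def by (metis DiffI UnCI lit_true_negate singletonD)
qed

lemma clause_true_if_agrees_on_changes:
  assumes "\<And>v. \<alpha> v \<noteq> \<beta> v \<Longrightarrow> \<gamma> v = \<beta> v" "\<not> clause_true \<alpha> C" "clause_true \<beta> C"
  shows "clause_true \<gamma> C"
proof -
  obtain l where l: "l \<in> C" "lit_true \<beta> l" "\<not> lit_true \<alpha> l"
    using assms(2,3) unfolding clause_true_def by blast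
  then have "lit_true \<gamma> l" using assms(1) by (cases l) auto
  then show ?thesis using l(1) unfolding clause_true_def by blast
qed

lemma refutation_medium_clause:
  fixes \<mu> :: "'v clause \<Rightarrow> nat"
  assumes R: "refutation F R"
    and axiom: "\<And>D. D \<in> F \<Longrightarrow> \<mu> D \<le> 1"
    and subadditive: "\<And>C D E. resolvent C D E \<Longrightarrow> \<mu> E \<le> \<mu> C + \<mu> D"
    and "2 \<le> \<mu> {}"
  shows "\<exists>C\<in>set R. \<mu> {} \<le> 3 * \<mu> C \<and> 3 * \<mu> C < 2 * \<mu> {}"
proof -
  let ?big = "\<lambda>i. i < length R \<and> \<mu> {} \<le> 3 * \<mu> (R ! i)"
  have "R \<noteq> []" "R ! (length R - 1) = {}"
    using R by (auto simp: refutation_def last_conv_nth)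
  then have "?big (length R - 1)" by simp
  define i where "i = (LEAST i. ?big i)"
  have i: "?big i" using LeastI[of ?big] \<open>?big (length R - 1)\<close> by (simp add: i_def)
  have small: "3 * \<mu> (R ! j) < \<mu> {}" if "j < i" for j
    using not_less_Least[of j ?big] that i unfolding i_def by auto
  have "3 * \<mu> (R ! i) < 2 * \<mu> {}"
  proof (cases "R ! i \<in> F")
    case True
    then show ?thesis using axiom \<open>2 \<le> \<mu> {}\<close> by fastforce
  next
    case False
    then obtain j k where "j < i" "k < i" "resolvent (R ! j) (R ! k) (R ! i)"
      using R i unfolding refutation_def by blast
    then have "\<mu> (R ! i) \<le> \<mu> (R ! j) + \<mu> (R ! k)" using subadditive by blast
    then show ?thesis using small[OF \<open>j < i\<close>] small[OF \<open>k < i\<close>] by linarith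
  qed
  then show ?thesis using i by (intro bexI[of _ "R ! i"]) auto
qed

section \<open>Schedules of the MAP walker\<close>

(* Round h occupies time steps 2h - 1 and 2h: the walker goes from L0 to leaf \<sigma> h and back,
   or stays at L0 if \<sigma> h = 0. *)
fun scheduled :: "(nat \<Rightarrow> nat) \<Rightarrow> action \<Rightarrow> nat \<Rightarrow> bool" where
  "scheduled \<sigma> (Move x y) t \<longleftrightarrow> \<sigma> ((t + 1) div 2) \<noteq> 0 \<and>
     (odd t \<and> x = L0 \<and> y = L (\<sigma> ((t + 1) div 2)) 1 \<or> even t \<and> x = L (\<sigma> ((t + 1) div 2)) 1 \<and> y = L0)"
| "scheduled \<sigma> (Noop (At x)) t \<longleftrightarrow> x = L0 \<and> \<sigma> ((t + 1) div 2) = 0"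
| "scheduled \<sigma> (Noop (Visited x)) t \<longleftrightarrow> (\<exists>h. 1 \<le> h \<and> 2 * h \<le> t \<and> \<sigma> h \<noteq> 0 \<and> x = L (\<sigma> h) 1)"

definition schedule_facts :: "(nat \<Rightarrow> nat) \<Rightarrow> nat \<Rightarrow> fact set" where
  "schedule_facts \<sigma> t = (if t = 0 then {At L0} else \<Union> (map_add ` {a. scheduled \<sigma> a t}))"

lemma schedule_factsI: "scheduled \<sigma> a t \<Longrightarrow> p \<in> map_add a \<Longrightarrow> t \<noteq> 0 \<Longrightarrow> p \<in> schedule_facts \<sigma> t"
  unfolding schedule_facts_def by auto

lemma At_L0_in_schedule_facts:
  assumes "even t"
  shows "At L0 \<in> schedule_facts \<sigma> t"
proof (cases "t = 0")
  case False
  show ?thesis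
  proof (cases "\<sigma> ((t + 1) div 2) = 0")
    case True
    then have "scheduled \<sigma> (Noop (At L0)) t" by simp
    then show ?thesis by (rule schedule_factsI) (simp_all add: \<open>t \<noteq> 0\<close>)
  next
    case False
    then have "scheduled \<sigma> (Move (L (\<sigma> ((t + 1) div 2)) 1) L0) t" using assms by simp
    then show ?thesis by (rule schedule_factsI) (simp_all add: \<open>t \<noteq> 0\<close>)
  qed
qed (simp add: schedule_facts_def)

lemma leaf_in_schedule_facts:
  assumes "odd t" "\<sigma> ((t + 1) div 2) \<noteq> 0"
  shows "At (L (\<sigma> ((t + 1) div 2)) 1) \<in> schedule_facts \<sigma> t"
    and "Visited (L (\<sigma> ((t + 1) div 2)) 1) \<in> schedule_facts \<sigma> t"
proof -
  have move: "scheduled \<sigma> (Move L0 (L (\<sigma> ((t + 1) div 2)) 1)) t" and "t \<noteq> 0"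
    using assms by (auto simp: odd_pos)
  show "At (L (\<sigma> ((t + 1) div 2)) 1) \<in> schedule_facts \<sigma> t"
    by (rule schedule_factsI[OF move]) (simp_all add: \<open>t \<noteq> 0\<close>)
  show "Visited (L (\<sigma> ((t + 1) div 2)) 1) \<in> schedule_facts \<sigma> t"
    by (rule schedule_factsI[OF move]) (simp_all add: \<open>t \<noteq> 0\<close>)
qed

lemma Visited_in_schedule_facts:
  assumes "scheduled \<sigma> (Noop (Visited x)) (Suc t)"
  shows "Visited x \<in> schedule_facts \<sigma> t"
proof -
  obtain h where h: "1 \<le> h" "2 * h \<le> Suc t" "\<sigma> h \<noteq> 0" "x = L (\<sigma> h) 1"
    using assms by auto
  show ?thesis
  proof (cases "2 * h \<le> t")
    case True
    then have "scheduled \<sigma> (Noop (Visited x)) t" using h by auto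
    then show ?thesis by (rule schedule_factsI) (use h True in auto)
  next
    case False
    then have "t = 2 * h - 1" "(t + 1) div 2 = h" using h by auto
    then show ?thesis using h leaf_in_schedule_facts(2)[of t \<sigma>] by auto
  qed
qed

lemma scheduled_pre:
  assumes "scheduled \<sigma> a (Suc t)"
  shows "map_pre a \<subseteq> schedule_facts \<sigma> t"
proof (cases a)
  case (Move x y)
  show ?thesis
  proof (cases "even t")
    case True
    then show ?thesis using assms Move At_L0_in_schedule_facts by auto
  next
    case False
    then have "(Suc t + 1) div 2 = (t + 1) div 2" by presburger
    then show ?thesis using assms Move False leaf_in_schedule_facts(1) by auto
  qed
next
  case (Noop p)
  show ?thesis
  proof (cases p)
    case (At x)
    show ?thesis
    proof (cases "even t")
      case True
      then show ?thesis using assms Noop At At_L0_in_schedule_facts by auto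
    next
      case False
      then have "(Suc t + 1) div 2 = (t + 1) div 2" "t \<noteq> 0" by presburger+
      then have "scheduled \<sigma> (Noop (At L0)) t" using assms Noop At by simp
      then have "At L0 \<in> schedule_facts \<sigma> t" by (rule schedule_factsI) (simp_all add: \<open>t \<noteq> 0\<close>)
      then show ?thesis using assms Noop At by simp
    qed
  next
    case (Visited x)
    then show ?thesis using assms Noop Visited_in_schedule_facts by simp
  qed
qed

lemma scheduled_independent:
  assumes "scheduled \<sigma> a t" "scheduled \<sigma> b t" "a \<noteq> b"
  shows "\<not> interfere (map_task1 n) a b"
  using assms unfolding interfere_def map_task1_def
  by (cases a rule: map_del.cases; cases b rule: map_del.cases) (auto elim: scheduled.elims)

lemma leaf_in_map_nodes: "2 \<le> n \<Longrightarrow> 1 \<le> k \<Longrightarrow> k \<le> n \<Longrightarrow> L k 1 \<in> map_nodes n"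
  unfolding map_nodes_def by (cases "k = 1") auto

lemma scheduled_in_acts:
  assumes "\<forall>h. \<sigma> h \<le> n" "2 \<le> n" "scheduled \<sigma> a t"
  shows "a \<in> acts (map_task1 n)"
proof (cases a)
  case (Move x y)
  have "1 \<le> \<sigma> ((t + 1) div 2)" "\<sigma> ((t + 1) div 2) \<le> n" using assms Move by auto
  then have "map_edge n x y" using assms Move unfolding map_edge_def map_adj0_def by auto
  then show ?thesis using Move by (simp add: map_task1_def)
next
  case (Noop p)
  show ?thesis
  proof (cases p)
    case (At x)
    then show ?thesis using Noop assms by (auto simp: map_task1_def map_facts_def map_nodes_def)
  next
    case (Visited x)
    then obtain h where "\<sigma> h \<noteq> 0" "x = L (\<sigma> h) 1" using Noop assms by auto
    then have "x \<in> map_nodes n" using leaf_in_map_nodes[of n "\<sigma> h"] assms by auto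
    then show ?thesis using Noop Visited by (auto simp: map_task1_def map_facts_def)
  qed
qed

lemma scheduled_in_planning_graph:
  assumes "\<forall>h. \<sigma> h \<le> n" "2 \<le> n" "1 \<le> t" "scheduled \<sigma> a t" "scheduled \<sigma> b t"
  shows "a \<in> actions_at (map_task1 n) t \<and> \<not> mutex_at (map_task1 n) t a b"
proof (rule parallel_run_in_planning_graph[where S = "\<lambda>t. {a. scheduled \<sigma> a t}" and st = "schedule_facts \<sigma>"])
  show "schedule_facts \<sigma> 0 = init (map_task1 n)" by (simp add: schedule_facts_def map_task1_def)
  show "\<And>t. schedule_facts \<sigma> (Suc t) = \<Union> (adds (map_task1 n) ` {a. scheduled \<sigma> a (Suc t)})"
    by (simp add: schedule_facts_def map_task1_def)
  show "\<And>t. {a. scheduled \<sigma> a (Suc t)} \<subseteq> acts (map_task1 n)" using scheduled_in_acts assms by blast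
  show "\<And>t a. a \<in> {a. scheduled \<sigma> a (Suc t)} \<Longrightarrow> pre (map_task1 n) a \<subseteq> schedule_facts \<sigma> t"
    using scheduled_pre by (simp add: map_task1_def)
  show "\<And>t a b. a \<in> {a. scheduled \<sigma> a (Suc t)} \<Longrightarrow> b \<in> {a. scheduled \<sigma> a (Suc t)} \<Longrightarrow> a \<noteq> b \<Longrightarrow>
     \<not> interfere (map_task1 n) a b" using scheduled_independent by blast
qed (use assms in auto)

section \<open>Critical assignments\<close>

(* Leaf i is never visited; visited-L_i^1 is made true from time 2f on, which violates only the
   precondition clause of that NOOP at time 2f. *)
definition critical :: "nat \<Rightarrow> (nat \<Rightarrow> nat) \<Rightarrow> nat \<Rightarrow> nat \<Rightarrow> bool" where
  "critical n \<sigma> i f \<longleftrightarrow> i \<in> {1..n} \<and> 2 \<le> f \<and> f \<le> n - 1 \<and>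
     bij_betw \<sigma> {1..n-1} ({1..n} - {i}) \<and> (\<forall>h. h \<notin> {1..n-1} \<longrightarrow> \<sigma> h = 0)"

fun critical_val :: "(nat \<Rightarrow> nat) \<Rightarrow> nat \<Rightarrow> nat \<Rightarrow> action \<times> nat \<Rightarrow> bool" where
  "critical_val \<sigma> i f (a, t) \<longleftrightarrow> scheduled \<sigma> a t \<or> a = Noop (Visited (L i 1)) \<and> 2 * f \<le> t"

lemma criticalD:
  assumes "critical n \<sigma> i f"
  shows "i \<in> {1..n}" "2 \<le> f" "f \<le> n - 1" "inj_on \<sigma> {1..n-1}" "\<sigma> ` {1..n-1} = {1..n} - {i}"
    "\<And>h. h \<notin> {1..n-1} \<Longrightarrow> \<sigma> h = 0"
  using assms unfolding critical_def bij_betw_def by auto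

lemma critical_range: "critical n \<sigma> i f \<Longrightarrow> h \<in> {1..n-1} \<Longrightarrow> \<sigma> h \<in> {1..n} - {i}"
  using criticalD(5) by blast

lemma critical_le: "critical n \<sigma> i f \<Longrightarrow> \<sigma> h \<le> n"
  by (cases "h \<in> {1..n-1}") (auto dest: critical_range criticalD(6))

lemma critical_not_missing:
  assumes "critical n \<sigma> i f"
  shows "\<sigma> h \<noteq> i"
proof (cases "h \<in> {1..n-1}")
  case True
  then show ?thesis using critical_range[OF assms True] by simp
next
  case False
  then show ?thesis using criticalD(1,6)[OF assms] by auto
qed

lemma critical_surj:
  assumes "critical n \<sigma> i f" "k \<in> {1..n}" "k \<noteq> i"
  shows "\<exists>h\<in>{1..n-1}. \<sigma> h = k"
proof -
  have "k \<in> \<sigma> ` {1..n-1}" using criticalD(5)[OF assms(1)] assms(2,3) by simp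
  then show ?thesis by blast
qed

lemma critical_inj:
  assumes "critical n \<sigma> i f" "\<sigma> h = \<sigma> h'" "\<sigma> h \<noteq> 0"
  shows "h = h'"
proof -
  have "h \<in> {1..n-1}" "h' \<in> {1..n-1}" using criticalD(6)[OF assms(1)] assms(2,3) by metis+
  then show ?thesis using criticalD(4)[OF assms(1)] assms(2) by (meson inj_onD)
qed

lemma scheduled_reassign_early_round:
  assumes "scheduled \<sigma> b t" "4 \<le> t"
  shows "scheduled (\<sigma>(1 := k)) b t \<or> scheduled (\<sigma>(2 := k)) b t"
proof -
  have round: "(t + 1) div 2 \<noteq> 1" using assms(2) by presburger
  show ?thesis
  proof (cases b)
    case (Move x y)
    then show ?thesis using assms(1) round by auto
  next
    case (Noop p)
    show ?thesis
    proof (cases p)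
      case (At x)
      then show ?thesis using assms(1) round Noop by auto
    next
      case (Visited x)
      then obtain h where h: "1 \<le> h" "2 * h \<le> t" "\<sigma> h \<noteq> 0" "x = L (\<sigma> h) 1"
        using assms(1) Noop by auto
      show ?thesis
      proof (cases "h = 1")
        case True
        then have "scheduled (\<sigma>(2 := k)) b t" using h Noop Visited by (auto intro!: exI[of _ 1])
        then show ?thesis ..
      next
        case False
        then have "scheduled (\<sigma>(1 := k)) b t" using h Noop Visited by (auto intro!: exI[of _ h])
        then show ?thesis ..
      qed
    qed
  qed
qed

(* Since 2f \<ge> 4, leaf i can be visited in round 1 or 2 instead, and one of these keeps b scheduled. *)
lemma critical_fake_visit_coscheduled:
  assumes c: "critical n \<sigma> i f" and t: "2 * f \<le> t" and b: "critical_val \<sigma> i f (b, t)"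
  shows "\<exists>\<sigma>'. (\<forall>h. \<sigma>' h \<le> n) \<and> scheduled \<sigma>' (Noop (Visited (L i 1))) t \<and> scheduled \<sigma>' b t"
proof -
  have "4 \<le> t" using criticalD(2)[OF c] t by linarith
  have i: "1 \<le> i" "i \<le> n" using criticalD(1)[OF c] by auto
  have early: "(\<forall>h. (\<sigma>(r := i)) h \<le> n) \<and> scheduled (\<sigma>(r := i)) (Noop (Visited (L i 1))) t"
    if "r \<in> {1, 2}" for r
    using that \<open>4 \<le> t\<close> i critical_le[OF c] by (auto intro!: exI[of _ r])
  show ?thesis
  proof (cases "b = Noop (Visited (L i 1))")
    case True
    then show ?thesis using early[of 1] by auto
  next
    case False
    then have "scheduled \<sigma> b t" using b by simp
    then show ?thesis
      using scheduled_reassign_early_round[OF _ \<open>4 \<le> t\<close>, of \<sigma> b i] early by blast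
  qed
qed

lemma critical_pair_coscheduled:
  assumes c: "critical n \<sigma> i f" and a: "critical_val \<sigma> i f (a, t)" and b: "critical_val \<sigma> i f (b, t)"
  shows "\<exists>\<sigma>'. (\<forall>h. \<sigma>' h \<le> n) \<and> scheduled \<sigma>' a t \<and> scheduled \<sigma>' b t"
proof (cases "scheduled \<sigma> a t \<and> scheduled \<sigma> b t")
  case True
  then show ?thesis using critical_le[OF c] by blast
next
  case False
  then consider "a = Noop (Visited (L i 1))" "2 * f \<le> t" | "b = Noop (Visited (L i 1))" "2 * f \<le> t"
    using a b by auto
  then show ?thesis
    using critical_fake_visit_coscheduled[OF c _ a] critical_fake_visit_coscheduled[OF c _ b] by cases blast+
qed

lemma critical_val_in_planning_graph:
  assumes "critical n \<sigma> i f" "2 \<le> n" "1 \<le> t"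
    and "critical_val \<sigma> i f (a, t)" "critical_val \<sigma> i f (b, t)"
  shows "a \<in> actions_at (map_task1 n) t \<and> \<not> mutex_at (map_task1 n) t a b"
  using critical_pair_coscheduled[OF assms(1,4,5)] scheduled_in_planning_graph assms(2,3) by blast

lemma map_task1_simps [simp]:
  "adds (map_task1 n) = map_add" "pre (map_task1 n) = map_pre"
  "goal (map_task1 n) = {Visited (L i 1) | i. 1 \<le> i \<and> i \<le> n}"
  by (simp_all add: map_task1_def)

lemma critical_goal_clause_true:
  assumes n: "3 \<le> n" and c: "critical n \<sigma> i f" and g: "1 \<le> g" "g \<le> n"
  shows "clause_true (critical_val \<sigma> i f)
    {Pos (a, 2 * n - 2) | a. a \<in> actions_at (map_task1 n) (2 * n - 2) \<and> Visited (L g 1) \<in> map_add a}"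
proof -
  let ?a = "Noop (Visited (L g 1))"
  have a_true: "critical_val \<sigma> i f (?a, 2 * n - 2)"
  proof (cases "g = i")
    case True
    then show ?thesis using criticalD(3)[OF c] by auto
  next
    case False
    moreover have "g \<in> {1..n}" using g by simp
    ultimately obtain h where "h \<in> {1..n-1}" "\<sigma> h = g" using critical_surj[OF c] by blast
    then have "scheduled \<sigma> ?a (2 * n - 2)" using g by (auto intro!: exI[of _ h])
    then show ?thesis by simp
  qed
  have "?a \<in> actions_at (map_task1 n) (2 * n - 2)"
    using critical_val_in_planning_graph[OF c _ _ a_true a_true] n by auto
  then have "Pos (?a, 2 * n - 2) \<in>
      {Pos (a, 2 * n - 2) | a. a \<in> actions_at (map_task1 n) (2 * n - 2) \<and> Visited (L g 1) \<in> map_add a}"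
    by auto
  moreover have "lit_true (critical_val \<sigma> i f) (Pos (?a, 2 * n - 2))"
    using a_true by (simp only: lit_true.simps)
  ultimately show ?thesis unfolding clause_true_def by blast
qed

lemma critical_mutex_clause_true:
  assumes "3 \<le> n" "critical n \<sigma> i f" "1 \<le> t" "mutex_at (map_task1 n) t a b"
  shows "clause_true (critical_val \<sigma> i f) {Neg (a, t), Neg (b, t)}"
  using critical_val_in_planning_graph[OF assms(2) _ assms(3), of a b] assms(1,4)
  unfolding clause_true_def by auto

lemma critical_pre_clause_true:
  assumes n: "3 \<le> n" and c: "critical n \<sigma> i f" and t: "2 \<le> t"
    and p: "p \<in> map_pre a" and not_fake: "a \<noteq> Noop (Visited (L i 1))"
  shows "clause_true (critical_val \<sigma> i f)
    (insert (Neg (a, t)) {Pos (a', t - 1) | a'. a' \<in> actions_at (map_task1 n) (t - 1) \<and> p \<in> map_add a'})"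
proof (cases "critical_val \<sigma> i f (a, t)")
  case False
  then show ?thesis unfolding clause_true_def by auto
next
  case True
  then have "scheduled \<sigma> a t" using not_fake by auto
  moreover obtain u where u: "t = Suc u" "u \<noteq> 0" using t by (cases t) auto
  ultimately have "p \<in> schedule_facts \<sigma> u" using scheduled_pre[of \<sigma> a u] p by auto
  then obtain a' where a': "scheduled \<sigma> a' u" "p \<in> map_add a'" using u unfolding schedule_facts_def by auto
  then have a'_true: "critical_val \<sigma> i f (a', u)" by simp
  then have "a' \<in> actions_at (map_task1 n) u"
    using critical_val_in_planning_graph[OF c _ _ a'_true a'_true] n u by auto
  then show ?thesis
    unfolding clause_true_def using a' u by (auto intro!: bexI[of _ "Pos (a', u)"])
qed

lemma MAP1_clause_falsified_for_one_missing_leaf: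
  assumes n: "3 \<le> n" and D: "D \<in> MAP1_cnf n"
  shows "\<exists>i0. \<forall>\<sigma> i f. critical n \<sigma> i f \<and> \<not> clause_true (critical_val \<sigma> i f) D \<longrightarrow> i = i0"
proof -
  let ?P = "map_task1 n" and ?T = "2 * n - 2"
  consider (goal) g where "D = {Pos (a, ?T) | a. a \<in> actions_at ?P ?T \<and> Visited (L g 1) \<in> map_add a}"
      "1 \<le> g" "g \<le> n"
    | (pre) a t p where "D = insert (Neg (a, t)) {Pos (a', t - 1) | a'. a' \<in> actions_at ?P (t - 1) \<and> p \<in> map_add a'}"
      "2 \<le> t" "p \<in> map_pre a"
    | (mutex) a b t where "D = {Neg (a, t), Neg (b, t)}" "1 \<le> t" "mutex_at ?P t a b"
    using D unfolding MAP1_cnf_def graphplan_cnf_def by auto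
  then show ?thesis
  proof cases
    case goal
    then show ?thesis using critical_goal_clause_true[OF n] by blast
  next
    case pre
    have "i = (SOME k. a = Noop (Visited (L k 1)))"
      if "critical n \<sigma> i f" "\<not> clause_true (critical_val \<sigma> i f) D" for \<sigma> i f
    proof -
      have "a = Noop (Visited (L i 1))" using critical_pre_clause_true[OF n that(1) pre(2,3)] that(2) pre(1) by blast
      then show ?thesis by simp
    qed
    then show ?thesis by blast
  next
    case mutex
    then show ?thesis using critical_mutex_clause_true[OF n] by blast
  qed
qed

lemma critical_swap:
  assumes c: "critical n \<sigma> i f" and h: "h \<in> {1..n-1}" "2 \<le> h"
  shows "critical n (\<sigma>(h := i)) (\<sigma> h) h"
proof -
  let ?j = "\<sigma> h"
  have j: "?j \<in> {1..n} - {i}" using critical_range[OF c h(1)] .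
  have inj: "inj_on \<sigma> {1..n-1}" and img: "\<sigma> ` {1..n-1} = {1..n} - {i}" using criticalD[OF c] by auto
  have "bij_betw \<sigma> ({1..n-1} - {h}) ({1..n} - {i} - {?j})"
    using inj img h(1) by (auto simp: bij_betw_def inj_on_image_set_diff intro: inj_on_subset)
  then have "bij_betw (\<sigma>(h := i)) ({1..n-1} - {h}) ({1..n} - {i} - {?j})"
    by (subst bij_betw_cong[where g = \<sigma>]) auto
  moreover have "bij_betw (\<sigma>(h := i)) {h} {i}" by (simp add: bij_betw_def)
  ultimately have "bij_betw (\<sigma>(h := i)) ({1..n-1} - {h} \<union> {h}) ({1..n} - {i} - {?j} \<union> {i})"
    by (rule bij_betw_combine) auto
  moreover have "{1..n-1} - {h} \<union> {h} = {1..n-1}" using h by auto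
  moreover have "{1..n} - {i} - {?j} \<union> {i} = {1..n} - {?j}" using j criticalD(1)[OF c] by auto
  ultimately have "bij_betw (\<sigma>(h := i)) {1..n-1} ({1..n} - {?j})" by simp
  then show ?thesis unfolding critical_def using j h criticalD(6)[OF c] by auto
qed

lemma scheduled_round_local:
  assumes "\<forall>x. a \<noteq> Noop (Visited x)" "\<sigma> ((t + 1) div 2) = \<sigma>' ((t + 1) div 2)"
  shows "scheduled \<sigma> a t \<longleftrightarrow> scheduled \<sigma>' a t"
  using assms by (cases "(\<sigma>, a, t)" rule: scheduled.cases) auto

lemma critical_val_visited_round:
  assumes c: "critical n \<sigma> i f" and h: "h \<in> {1..n-1}"
  shows "critical_val \<sigma> i f (Noop (Visited (L (\<sigma> h) 1)), t) \<longleftrightarrow> 2 * h \<le> t"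
proof -
  have "\<sigma> h \<noteq> i" "\<sigma> h \<noteq> 0" using critical_range[OF c h] by auto
  then show ?thesis using h critical_inj[OF c] by auto
qed

lemma critical_val_visited_missing:
  assumes "critical n \<sigma> i f"
  shows "critical_val \<sigma> i f (Noop (Visited (L i 1)), t) \<longleftrightarrow> 2 * f \<le> t"
  using critical_not_missing[OF assms] by auto

lemma critical_val_visited_other:
  assumes "critical n \<sigma> i f" "\<forall>k\<in>{1..n}. x \<noteq> L k 1"
  shows "\<not> critical_val \<sigma> i f (Noop (Visited x), t)"
  using assms critical_le[OF assms(1)] criticalD(1)[OF assms(1)] by auto

lemma critical_val_swap_other_visits:
  assumes c: "critical n \<sigma> i f" and h: "h \<in> {1..n-1}" "2 \<le> h" and x: "x \<noteq> L i 1"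
  shows "critical_val (\<sigma>(h := i)) (\<sigma> h) h (Noop (Visited x), t) = critical_val \<sigma> i f (Noop (Visited x), t)"
proof -
  have c': "critical n (\<sigma>(h := i)) (\<sigma> h) h" using critical_swap[OF c h] .
  show ?thesis
  proof (cases "\<exists>k\<in>{1..n}. x = L k 1")
    case True
    then obtain k where k: "k \<in> {1..n}" "x = L k 1" by blast
    show ?thesis
    proof (cases "k = \<sigma> h")
      case True
      then show ?thesis
        using critical_val_visited_round[OF c h(1)] critical_val_visited_missing[OF c'] k by simp
    next
      case False
      obtain h' where h': "h' \<in> {1..n-1}" "\<sigma> h' = k" using critical_surj[OF c k(1)] x k by auto
      then have "(\<sigma>(h := i)) h' = k" using False by auto
      then show ?thesis
        using critical_val_visited_round[OF c h'(1)] critical_val_visited_round[OF c' h'(1)] h' k by simp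
    qed
  next
    case False
    then show ?thesis
      using critical_val_visited_other[OF c] critical_val_visited_other[OF c'] by blast
  qed
qed

lemma critical_val_swap:
  assumes c: "critical n \<sigma> i f" and h: "h \<in> {1..n-1}" "2 \<le> h"
    and \<tau>: "critical n \<tau> i' f'" "\<tau> h = i"
    and differs: "critical_val \<sigma> i f v \<noteq> critical_val (\<sigma>(h := i)) (\<sigma> h) h v"
  shows "critical_val \<tau> i' f' v = critical_val (\<sigma>(h := i)) (\<sigma> h) h v"
proof -
  obtain a t where v: "v = (a, t)" by fastforce
  consider (visit_i) "a = Noop (Visited (L i 1))"
    | (visit_other) x where "a = Noop (Visited x)" "x \<noteq> L i 1"
    | (local) "\<forall>x. a \<noteq> Noop (Visited x)"
    by blast
  then show ?thesis
  proof cases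
    case visit_i
    have "critical_val \<tau> i' f' v \<longleftrightarrow> 2 * h \<le> t"
      using critical_val_visited_round[OF \<tau>(1) h(1)] \<tau>(2) v visit_i by simp
    moreover have "critical_val (\<sigma>(h := i)) (\<sigma> h) h v \<longleftrightarrow> 2 * h \<le> t"
      using critical_val_visited_round[OF critical_swap[OF c h] h(1)] v visit_i by simp
    ultimately show ?thesis by simp
  next
    case (visit_other x)
    then show ?thesis using critical_val_swap_other_visits[OF c h visit_other(2)] differs v by simp
  next
    case local
    show ?thesis
    proof (cases "(t + 1) div 2 = h")
      case True
      then show ?thesis using scheduled_round_local[OF local, of \<tau> t "\<sigma>(h := i)"] \<tau>(2) v local by auto
    next
      case False
      then have "critical_val \<sigma> i f v = critical_val (\<sigma>(h := i)) (\<sigma> h) h v"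
        using scheduled_round_local[OF local, of \<sigma> t "\<sigma>(h := i)"] v local by auto
      then show ?thesis using differs by contradiction
    qed
  qed
qed

section \<open>Restrictions and forced pairs\<close>

(* A restriction fixes the leaf p h visited in round h; p h = 0 leaves round h free. *)
definition restr_dom :: "(nat \<Rightarrow> nat) \<Rightarrow> nat set" where
  "restr_dom p = {h. p h \<noteq> 0}"

definition restriction :: "nat \<Rightarrow> (nat \<Rightarrow> nat) \<Rightarrow> bool" where
  "restriction n p \<longleftrightarrow> restr_dom p \<subseteq> {1..n-1} \<and> p ` restr_dom p \<subseteq> {1..n} \<and> inj_on p (restr_dom p)"

definition extends :: "(nat \<Rightarrow> nat) \<Rightarrow> (nat \<Rightarrow> nat) \<Rightarrow> bool" where
  "extends \<sigma> p \<longleftrightarrow> (\<forall>h\<in>restr_dom p. \<sigma> h = p h)"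

definition free_leaves :: "nat \<Rightarrow> (nat \<Rightarrow> nat) \<Rightarrow> nat set" where
  "free_leaves n p = {1..n} - p ` restr_dom p"

lemma finite_restr_dom: "restriction n p \<Longrightarrow> finite (restr_dom p)"
  unfolding restriction_def using finite_subset by blast

lemma card_free_leaves:
  assumes "restriction n p"
  shows "card (free_leaves n p) = n - card (restr_dom p)"
proof -
  have "p ` restr_dom p \<subseteq> {1..n}" "finite (p ` restr_dom p)"
    using assms finite_restr_dom by (auto simp: restriction_def)
  then have "card (free_leaves n p) = n - card (p ` restr_dom p)"
    unfolding free_leaves_def by (simp add: card_Diff_subset)
  also have "card (p ` restr_dom p) = card (restr_dom p)"
    using assms by (simp add: restriction_def card_image)
  finally show ?thesis .
qed

lemma critical_extension_exists:
  assumes n: "3 \<le> n" and p: "restriction n p" and i: "i \<in> free_leaves n p"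
  shows "\<exists>\<sigma> f. critical n \<sigma> i f \<and> extends \<sigma> p"
proof -
  let ?rounds = "{1..n-1::nat}" and ?D = "restr_dom p"
  have D: "?D \<subseteq> ?rounds" "finite ?D" "inj_on p ?D" "p ` ?D \<subseteq> {1..n} - {i}"
    using p i finite_restr_dom[OF p] by (auto simp: restriction_def free_leaves_def)
  let ?A = "?rounds - ?D" and ?B = "{1..n} - {i} - p ` ?D"
  have "card ?A = (n - 1) - card ?D" using D by (simp add: card_Diff_subset)
  moreover have "card ?B = (n - 1) - card ?D"
    using D i by (simp add: card_Diff_subset card_image finite_subset free_leaves_def)
  ultimately obtain g where g: "bij_betw g ?A ?B" using finite_same_card_bij[of ?A ?B] by auto
  define \<sigma> where "\<sigma> = (\<lambda>k. if k \<in> ?D then p k else if k \<in> ?rounds then g k else 0)"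
  have "bij_betw \<sigma> ?D (p ` ?D)"
    using D(3) by (auto simp: bij_betw_def \<sigma>_def intro: inj_on_cong[THEN iffD1])
  moreover have "bij_betw \<sigma> ?A ?B" using g by (subst bij_betw_cong[where g = g]) (auto simp: \<sigma>_def)
  ultimately have "bij_betw \<sigma> (?D \<union> ?A) (p ` ?D \<union> ?B)" by (rule bij_betw_combine) auto
  moreover have "?D \<union> ?A = ?rounds" "p ` ?D \<union> ?B = {1..n} - {i}" using D by auto
  ultimately have "bij_betw \<sigma> ?rounds ({1..n} - {i})" by simp
  moreover have "\<sigma> h = 0" if "h \<notin> ?rounds" for h using that D(1) by (auto simp: \<sigma>_def)
  ultimately have "critical n \<sigma> i 2" using i n by (auto simp: critical_def free_leaves_def)
  moreover have "extends \<sigma> p" by (simp add: extends_def \<sigma>_def)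
  ultimately show ?thesis by blast
qed

definition falsified_leaves :: "nat \<Rightarrow> (nat \<Rightarrow> nat) \<Rightarrow> (action \<times> nat) clause \<Rightarrow> nat set" where
  "falsified_leaves n p C =
     {i. \<exists>\<sigma> f. critical n \<sigma> i f \<and> extends \<sigma> p \<and> \<not> clause_true (critical_val \<sigma> i f) C}"

lemma critical_extends_missing_free:
  assumes "critical n \<sigma> i f" "extends \<sigma> p"
  shows "i \<in> free_leaves n p"
proof -
  have "i \<notin> p ` restr_dom p"
    using assms critical_not_missing[OF assms(1)] unfolding extends_def by force
  then show ?thesis using criticalD(1)[OF assms(1)] unfolding free_leaves_def by blast
qed

lemma falsified_leaves_subset: "falsified_leaves n p C \<subseteq> free_leaves n p"
  unfolding falsified_leaves_def using critical_extends_missing_free by blast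

lemma finite_falsified_leaves: "finite (falsified_leaves n p C)"
  using falsified_leaves_subset by (rule finite_subset) (simp add: free_leaves_def)

lemma falsified_leaves_empty_clause:
  assumes "3 \<le> n" "restriction n p"
  shows "falsified_leaves n p {} = free_leaves n p"
  using critical_extension_exists[OF assms] critical_extends_missing_free
  by (auto simp: falsified_leaves_def clause_true_def)

lemma card_falsified_leaves_axiom:
  assumes "3 \<le> n" "D \<in> MAP1_cnf n"
  shows "card (falsified_leaves n p D) \<le> 1"
proof -
  obtain i0 where "\<forall>\<sigma> i f. critical n \<sigma> i f \<and> \<not> clause_true (critical_val \<sigma> i f) D \<longrightarrow> i = i0"
    using MAP1_clause_falsified_for_one_missing_leaf[OF assms] by blast
  then have "falsified_leaves n p D \<subseteq> {i0}" unfolding falsified_leaves_def by blast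
  then show ?thesis using card_mono[of "{i0}"] by fastforce
qed

lemma card_falsified_leaves_resolvent:
  assumes "resolvent C D E"
  shows "card (falsified_leaves n p E) \<le> card (falsified_leaves n p C) + card (falsified_leaves n p D)"
proof -
  have "falsified_leaves n p E \<subseteq> falsified_leaves n p C \<union> falsified_leaves n p D"
    using clause_true_resolvent[OF assms] unfolding falsified_leaves_def by blast
  then have "card (falsified_leaves n p E) \<le> card (falsified_leaves n p C \<union> falsified_leaves n p D)"
    by (intro card_mono) (simp_all add: finite_falsified_leaves)
  also have "\<dots> \<le> card (falsified_leaves n p C) + card (falsified_leaves n p D)"
    by (rule card_Un_le)
  finally show ?thesis .
qed

lemma refutation_medium_falsified_clause:
  assumes "3 \<le> n" "restriction n p" "refutation (MAP1_cnf n) R" "2 \<le> card (free_leaves n p)"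
  shows "\<exists>C\<in>set R. card (free_leaves n p) \<le> 3 * card (falsified_leaves n p C)
    \<and> 3 * card (falsified_leaves n p C) < 2 * card (free_leaves n p)"
  using refutation_medium_clause[OF assms(3), of "\<lambda>C. card (falsified_leaves n p C)"]
    card_falsified_leaves_axiom[OF assms(1)] card_falsified_leaves_resolvent
    falsified_leaves_empty_clause[OF assms(1,2)] assms(4)
  by auto

definition forced_pairs :: "nat \<Rightarrow> (action \<times> nat) clause \<Rightarrow> (nat \<times> nat) set" where
  "forced_pairs n C = {(j, h). j \<in> {1..n} \<and> h \<in> {1..n-1} \<and>
     (\<forall>\<tau> i f. critical n \<tau> i f \<and> \<tau> h = j \<longrightarrow> clause_true (critical_val \<tau> i f) C)}"

definition hits :: "('c \<Rightarrow> (nat \<times> nat) set) \<Rightarrow> (nat \<Rightarrow> nat) \<Rightarrow> 'c \<Rightarrow> bool" where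
  "hits M p C \<longleftrightarrow> (\<exists>h\<in>restr_dom p. (p h, h) \<in> M C)"

lemma forced_pairs_subset: "forced_pairs n C \<subseteq> {1..n} \<times> {1..n-1}"
  by (auto simp: forced_pairs_def)

lemma finite_forced_pairs: "finite (forced_pairs n C)"
  using forced_pairs_subset by (rule finite_subset) simp

(* Visiting i in round h and making \<sigma> h the missing leaf, faked at time 2h, changes only
   variables on which all critical assignments with \<tau> h = i agree. *)
lemma swap_forces_pair:
  assumes c: "critical n \<sigma> i f" "extends \<sigma> p" "\<not> clause_true (critical_val \<sigma> i f) C"
    and h: "h \<in> {1..n-1}" "2 \<le> h" "\<sigma> h \<in> free_leaves n p - falsified_leaves n p C"
  shows "(i, h) \<in> forced_pairs n C"
proof -
  have c': "critical n (\<sigma>(h := i)) (\<sigma> h) h" using critical_swap[OF c(1) h(1,2)] .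
  have "h \<notin> restr_dom p"
    using c(2) h(3) unfolding extends_def free_leaves_def by (metis Diff_iff imageI)
  then have "extends (\<sigma>(h := i)) p" using c(2) unfolding extends_def by auto
  then have swapped_true: "clause_true (critical_val (\<sigma>(h := i)) (\<sigma> h) h) C"
    using c' h(3) unfolding falsified_leaves_def by blast
  have "clause_true (critical_val \<tau> i' f') C" if "critical n \<tau> i' f'" "\<tau> h = i" for \<tau> i' f'
    using clause_true_if_agrees_on_changes[OF critical_val_swap[OF c(1) h(1,2) that] c(3) swapped_true] .
  then show ?thesis using criticalD(1)[OF c(1)] h(1) by (simp add: forced_pairs_def)
qed

lemma critical_card_late_rounds:
  assumes c: "critical n \<sigma> i f" and B: "B \<subseteq> {1..n} - {i}"
  shows "card B - 1 \<le> card {h \<in> {1..n-1}. 2 \<le> h \<and> \<sigma> h \<in> B}"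
proof -
  let ?G = "{h \<in> {1..n-1}. \<sigma> h \<in> B}"
  have "\<sigma> ` ?G = B"
  proof
    show "B \<subseteq> \<sigma> ` ?G"
    proof
      fix b assume "b \<in> B"
      then have "b \<in> \<sigma> ` {1..n-1}" using criticalD(5)[OF c] B by blast
      then show "b \<in> \<sigma> ` ?G" using \<open>b \<in> B\<close> by auto
    qed
  qed auto
  moreover have "inj_on \<sigma> ?G" using criticalD(4)[OF c] by (rule inj_on_subset) blast
  ultimately have "card ?G = card B" using card_image by fastforce
  moreover have "{h \<in> {1..n-1}. 2 \<le> h \<and> \<sigma> h \<in> B} = ?G - {1}" by auto
  moreover have "card ?G - 1 \<le> card (?G - {1})" using diff_card_le_card_Diff[of "{1}" ?G] by simp
  ultimately show ?thesis by simp
qed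

lemma card_forced_pairs_ge:
  fixes n :: nat and p :: "nat \<Rightarrow> nat" and C :: "(action \<times> nat) clause"
  defines "I \<equiv> falsified_leaves n p C" and "m \<equiv> card (free_leaves n p)"
  shows "card I * (m - card I - 1) \<le> card (forced_pairs n C)"
proof -
  have "\<forall>i\<in>I. \<exists>w. critical n (fst w) i (snd w) \<and> extends (fst w) p \<and>
      \<not> clause_true (critical_val (fst w) i (snd w)) C"
    by (auto simp: I_def falsified_leaves_def)
  then have "\<exists>w. \<forall>i\<in>I. critical n (fst (w i)) i (snd (w i)) \<and> extends (fst (w i)) p \<and>
      \<not> clause_true (critical_val (fst (w i)) i (snd (w i))) C"
    by (rule bchoice)
  then obtain w where w: "\<forall>i\<in>I. critical n (fst (w i)) i (snd (w i)) \<and> extends (fst (w i)) p \<and>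
      \<not> clause_true (critical_val (fst (w i)) i (snd (w i))) C"
    by blast
  define H where "H i = {h \<in> {1..n-1}. 2 \<le> h \<and> fst (w i) h \<in> free_leaves n p - I}" for i
  have "Sigma I H \<subseteq> forced_pairs n C"
    using w swap_forces_pair unfolding H_def I_def by blast
  have I_free: "I \<subseteq> free_leaves n p" "finite I"
    using falsified_leaves_subset finite_falsified_leaves by (auto simp: I_def)
  have "m - card I - 1 \<le> card (H i)" if "i \<in> I" for i
  proof -
    have "critical n (fst (w i)) i (snd (w i))" using w that by blast
    moreover have "free_leaves n p - I \<subseteq> {1..n} - {i}" using that by (auto simp: free_leaves_def)
    ultimately have "card (free_leaves n p - I) - 1 \<le> card (H i)"
      unfolding H_def by (rule critical_card_late_rounds)
    moreover have "card (free_leaves n p - I) = m - card I"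
      using I_free by (simp add: m_def card_Diff_subset)
    ultimately show ?thesis by simp
  qed
  then have "card I * (m - card I - 1) \<le> (\<Sum>i\<in>I. card (H i))"
    using sum_mono[of I "\<lambda>_. m - card I - 1"] by simp
  also have "\<dots> = card (Sigma I H)" using I_free by (simp add: H_def)
  also have "\<dots> \<le> card (forced_pairs n C)"
    using \<open>Sigma I H \<subseteq> forced_pairs n C\<close> by (intro card_mono finite_forced_pairs)
  finally show ?thesis .
qed

lemma not_hits_if_falsified:
  assumes "falsified_leaves n p C \<noteq> {}"
  shows "\<not> hits (forced_pairs n) p C"
  using assms unfolding hits_def falsified_leaves_def forced_pairs_def extends_def by fastforce

section \<open>Greedy restrictions\<close>

lemma restriction_update:
  assumes p: "restriction n p" and j: "j \<in> free_leaves n p" and h: "h \<in> {1..n-1} - restr_dom p"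
  shows "restriction n (p(h := j))" and "restr_dom (p(h := j)) = insert h (restr_dom p)"
proof -
  show dom: "restr_dom (p(h := j)) = insert h (restr_dom p)"
    using j h by (auto simp: restr_dom_def free_leaves_def)
  have h_new: "h \<notin> restr_dom p" using h by blast
  then have image: "p(h := j) ` restr_dom p = p ` restr_dom p" by auto
  have "inj_on (p(h := j)) (restr_dom p)"
    using p j by (intro inj_on_fun_updI) (auto simp: restriction_def free_leaves_def)
  moreover have "j \<notin> p ` restr_dom p" using j by (simp add: free_leaves_def)
  ultimately have "inj_on (p(h := j)) (insert h (restr_dom p))"
    using h_new image by simp
  then show "restriction n (p(h := j))"
    using p j h image unfolding restriction_def dom free_leaves_def by auto
qed

lemma hits_update:
  assumes "h \<notin> restr_dom p" "j \<noteq> 0"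
  shows "hits M (p(h := j)) C \<longleftrightarrow> hits M p C \<or> (j, h) \<in> M C"
proof
  assume "hits M (p(h := j)) C"
  then obtain h' where "h' \<in> restr_dom (p(h := j))" "((p(h := j)) h', h') \<in> M C"
    unfolding hits_def by blast
  then show "hits M p C \<or> (j, h) \<in> M C"
    by (cases "h' = h") (auto simp: hits_def restr_dom_def)
next
  assume "hits M p C \<or> (j, h) \<in> M C"
  then show "hits M (p(h := j)) C"
  proof
    assume "hits M p C"
    then obtain h' where h': "h' \<in> restr_dom p" "(p h', h') \<in> M C" unfolding hits_def by blast
    then have "h' \<noteq> h" using assms(1) by blast
    then show ?thesis using h' unfolding hits_def restr_dom_def by (intro bexI[of _ h']) auto
  next
    assume "(j, h) \<in> M C"
    then show ?thesis using assms(2) unfolding hits_def restr_dom_def by (intro bexI[of _ h]) auto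
  qed
qed

lemma exists_popular_element:
  assumes U: "finite U" "U \<noteq> {}" and P: "finite P"
    and large: "\<And>C. C \<in> U \<Longrightarrow> d \<le> card (M C \<inter> P)" and "card P \<le> c * d" "0 < d"
  shows "\<exists>x\<in>P. card U \<le> c * card {C \<in> U. x \<in> M C}"
proof (rule ccontr)
  assume "\<not> ?thesis"
  then have few: "c * card {C \<in> U. x \<in> M C} < card U" if "x \<in> P" for x
    using that by force
  obtain C where "C \<in> U" using U by blast
  then have "P \<noteq> {}" using large[of C] \<open>0 < d\<close> by auto
  have "card U * d \<le> (\<Sum>C\<in>U. card {x \<in> P. x \<in> M C})"
    using sum_mono[of U "\<lambda>_. d"] large by (simp add: Int_def conj_commute mult.commute)
  also have "\<dots> = (\<Sum>x\<in>P. card {C \<in> U. x \<in> M C})"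
    by (rule sum_multicount_gen[OF U(1) P]) simp
  finally have "c * (card U * d) \<le> c * (\<Sum>x\<in>P. card {C \<in> U. x \<in> M C})"
    by simp
  also have "\<dots> = (\<Sum>x\<in>P. c * card {C \<in> U. x \<in> M C})"
    by (simp add: sum_distrib_left)
  also have "\<dots> < (\<Sum>x\<in>P. card U)"
    using few P \<open>P \<noteq> {}\<close> by (intro sum_strict_mono) auto
  also have "\<dots> \<le> c * d * card U" using \<open>card P \<le> c * d\<close> by simp
  finally show False by (simp add: algebra_simps)
qed

lemma card_outside_free_box:
  assumes p: "restriction n p" and A: "A \<subseteq> {1..n} \<times> {1..n-1}"
  shows "card (A - free_leaves n p \<times> ({1..n-1} - restr_dom p)) \<le> 2 * n * card (restr_dom p)"
proof -
  let ?D = "restr_dom p"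
  have fin: "finite ?D" using finite_restr_dom[OF p] .
  have "A - free_leaves n p \<times> ({1..n-1} - ?D) \<subseteq> (p ` ?D \<times> {1..n-1}) \<union> ({1..n} \<times> ?D)"
    using A unfolding free_leaves_def by blast
  then have "card (A - free_leaves n p \<times> ({1..n-1} - ?D)) \<le> card ((p ` ?D \<times> {1..n-1}) \<union> ({1..n} \<times> ?D))"
    using fin by (intro card_mono) auto
  also have "\<dots> \<le> card (p ` ?D \<times> {1..n-1}) + card ({1..n} \<times> ?D)"
    by (rule card_Un_le)
  also have "\<dots> \<le> card ?D * (n - 1) + n * card ?D"
    using card_image_le[OF fin, of p] by (simp add: card_cartesian_product)
  also have "\<dots> \<le> 2 * n * card ?D" by (simp add: algebra_simps)
  finally show ?thesis .
qed

lemma exists_popular_free_pair: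
  assumes W: "finite W" "\<And>C. C \<in> W \<Longrightarrow> M C \<subseteq> {1..n} \<times> {1..n-1} \<and> w \<le> card (M C)"
    and p: "restriction n p" and unhit: "{C \<in> W. \<not> hits M p C} \<noteq> {}"
    and n: "2 \<le> n" and w: "n * n + 40 * n * card (restr_dom p) \<le> 20 * w"
  shows "\<exists>j h. j \<in> free_leaves n p \<and> h \<in> {1..n-1} - restr_dom p \<and>
    card {C \<in> W. \<not> hits M p C} \<le> 20 * card {C \<in> {C \<in> W. \<not> hits M p C}. (j, h) \<in> M C}"
proof -
  let ?U = "{C \<in> W. \<not> hits M p C}" and ?d = "card (restr_dom p)"
  define P where "P = free_leaves n p \<times> ({1..n-1} - restr_dom p)"
  have "40 * n * ?d = 20 * (2 * n * ?d)" by simp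
  then have w': "n * n \<le> 20 * (w - 2 * n * ?d)" using w by linarith
  have "0 < n * n" using n by simp
  then have pos: "0 < w - 2 * n * ?d" using w' by linarith
  have "card P \<le> card ({1..n} \<times> {1..n-1})"
    unfolding P_def free_leaves_def by (intro card_mono) auto
  also have "\<dots> \<le> n * n" by simp
  finally have "card P \<le> 20 * (w - 2 * n * ?d)" using w' by linarith
  moreover have "w - 2 * n * ?d \<le> card (M C \<inter> P)" if "C \<in> ?U" for C
  proof -
    have "card (M C) \<le> card (M C \<inter> P) + card (M C - P)"
      by (metis Int_Diff_Un card_Un_le)
    then show ?thesis
      using W(2)[of C] that card_outside_free_box[OF p, of "M C"] unfolding P_def by fastforce
  qed
  moreover note pos
  moreover have "finite P" by (simp add: P_def free_leaves_def)
  moreover have "finite ?U" using W(1) by simp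
  ultimately obtain x where "x \<in> P" "card ?U \<le> 20 * card {C \<in> ?U. x \<in> M C}"
    using exists_popular_element[of ?U P "w - 2 * n * ?d" M 20] unhit by blast
  then show ?thesis unfolding P_def by blast
qed

lemma greedy_step:
  assumes W: "finite W" "\<And>C. C \<in> W \<Longrightarrow> M C \<subseteq> {1..n} \<times> {1..n-1} \<and> w \<le> card (M C)"
    and p: "restriction n p" and unhit: "{C \<in> W. \<not> hits M p C} \<noteq> {}"
    and n: "2 \<le> n" and w: "n * n + 40 * n * card (restr_dom p) \<le> 20 * w"
  shows "\<exists>p'. restriction n p' \<and> card (restr_dom p') = card (restr_dom p) + 1 \<and>
    20 * card {C \<in> W. \<not> hits M p' C} \<le> 19 * card {C \<in> W. \<not> hits M p C}"
proof -
  let ?U = "{C \<in> W. \<not> hits M p C}"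
  obtain j h where jh: "j \<in> free_leaves n p" "h \<in> {1..n-1} - restr_dom p"
    and popular: "card ?U \<le> 20 * card {C \<in> ?U. (j, h) \<in> M C}"
    using exists_popular_free_pair[OF W p unhit n w] by blast
  define p' where "p' = p(h := j)"
  have p': "restriction n p'" "restr_dom p' = insert h (restr_dom p)"
    using restriction_update[OF p jh] by (simp_all add: p'_def)
  have "j \<noteq> 0" using jh(1) by (simp add: free_leaves_def)
  then have unhit': "{C \<in> W. \<not> hits M p' C} = ?U - {C \<in> ?U. (j, h) \<in> M C}"
    using hits_update[of h p j M] jh(2) by (auto simp: p'_def)
  have "card {C \<in> W. \<not> hits M p' C} = card ?U - card {C \<in> ?U. (j, h) \<in> M C}"
  proof -
    have "finite {C \<in> ?U. (j, h) \<in> M C}" "{C \<in> ?U. (j, h) \<in> M C} \<subseteq> ?U" using W(1) by auto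
    from card_Diff_subset[OF this] show ?thesis unfolding unhit' .
  qed
  moreover have "card (restr_dom p') = card (restr_dom p) + 1"
    using p' jh(2) finite_restr_dom[OF p] by simp
  ultimately show ?thesis using p' popular by (intro exI[of _ p']) auto
qed

lemma greedy_restriction:
  assumes W: "finite W" "\<And>C. C \<in> W \<Longrightarrow> M C \<subseteq> {1..n} \<times> {1..n-1} \<and> w \<le> card (M C)"
    and n: "2 \<le> n" and w: "n * n + 40 * n * s \<le> 20 * w"
  shows "\<exists>p. restriction n p \<and> card (restr_dom p) \<le> s \<and>
    20 ^ s * card {C \<in> W. \<not> hits M p C} \<le> 19 ^ s * card W"
  using w
proof (induction s)
  case 0
  have "restriction n (\<lambda>_. 0)" "restr_dom (\<lambda>_. 0::nat) = {}"
    by (auto simp: restriction_def restr_dom_def)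
  moreover have "card {C \<in> W. \<not> hits M (\<lambda>_. 0) C} \<le> card W" using W(1) by (intro card_mono) auto
  ultimately show ?case by (intro exI[of _ "\<lambda>_. 0"]) simp
next
  case (Suc s)
  then obtain p where p: "restriction n p" "card (restr_dom p) \<le> s"
    "20 ^ s * card {C \<in> W. \<not> hits M p C} \<le> 19 ^ s * card W"
    by fastforce
  show ?case
  proof (cases "{C \<in> W. \<not> hits M p C} = {}")
    case True
    then show ?thesis using p(1,2) by (intro exI[of _ p]) (simp add: True)
  next
    case False
    have "40 * n * card (restr_dom p) \<le> 40 * n * Suc s" using p(2) by (intro mult_le_mono2) simp
    then have "n * n + 40 * n * card (restr_dom p) \<le> 20 * w" using Suc.prems by linarith
    then obtain p' where p': "restriction n p'" "card (restr_dom p') = card (restr_dom p) + 1"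
      "20 * card {C \<in> W. \<not> hits M p' C} \<le> 19 * card {C \<in> W. \<not> hits M p C}"
      using greedy_step[OF W p(1) False n] by blast
    have "20 ^ Suc s * card {C \<in> W. \<not> hits M p' C} = 20 ^ s * (20 * card {C \<in> W. \<not> hits M p' C})"
      by simp
    also have "\<dots> \<le> 19 * (20 ^ s * card {C \<in> W. \<not> hits M p C})" using p'(3) by simp
    also have "\<dots> \<le> 19 ^ Suc s * card W" using p(3) by simp
    finally show ?thesis using p' p(2) by (intro exI[of _ p']) simp
  qed
qed

lemma medium_product_bound:
  fixes k m :: nat
  assumes "m \<le> 3 * k" "3 * k < 2 * m"
  shows "2 * m * m \<le> 9 * (k * (m - k - 1)) + 6 * m"
proof -
  have "k + 1 \<le> m" using assms by linarith
  then have "int (k * (m - k - 1)) = int k * (int m - int k - 1)" by simp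
  moreover have "0 \<le> (3 * int k - int m) * (2 * int m - 3 * int k)"
    using assms by (intro mult_nonneg_nonneg) linarith+
  ultimately have "2 * int m * int m \<le> 9 * int (k * (m - k - 1)) + 6 * int m"
    using assms by (simp add: algebra_simps)
  then have "int (2 * m * m) \<le> int (9 * (k * (m - k - 1)) + 6 * m)" by simp
  then show ?thesis by (simp only: of_nat_le_iff)
qed

lemma refutation_wide_unhit_clause:
  assumes "3 \<le> n" "restriction n p" "refutation (MAP1_cnf n) R"
    and m: "2 \<le> card (free_leaves n p)"
  shows "\<exists>C\<in>set R. \<not> hits (forced_pairs n) p C \<and>
    2 * card (free_leaves n p) * card (free_leaves n p)
      \<le> 9 * card (forced_pairs n C) + 6 * card (free_leaves n p)"
proof -
  let ?m = "card (free_leaves n p)"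
  obtain C where C: "C \<in> set R" "?m \<le> 3 * card (falsified_leaves n p C)"
    "3 * card (falsified_leaves n p C) < 2 * ?m"
    using refutation_medium_falsified_clause[OF assms] by blast
  then have "falsified_leaves n p C \<noteq> {}" using m by auto
  moreover have "2 * ?m * ?m \<le> 9 * card (forced_pairs n C) + 6 * ?m"
    using medium_product_bound[OF C(2,3)] card_forced_pairs_ge[of n p C] by linarith
  ultimately show ?thesis using C(1) not_hits_if_falsified by blast
qed

lemma MAP1_refutation_length_ge:
  assumes n: "80 \<le> n" and R: "refutation (MAP1_cnf n) R"
  shows "20 ^ (n div 40) \<le> 19 ^ (n div 40) * length R"
proof -
  define s where "s = n div 40"
  define w where "w = n * n div 10 + 1"
  define W where "W = {C \<in> set R. w \<le> card (forced_pairs n C)}"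
  have "40 * s \<le> n" by (simp add: s_def)
  then have "40 * n * s \<le> n * n" by (metis mult.assoc mult.commute mult_le_mono2)
  moreover have "n * n < 10 * w" by (simp add: w_def)
  ultimately have "n * n + 40 * n * s \<le> 20 * w" by linarith
  moreover have "finite W" by (simp add: W_def)
  moreover have "forced_pairs n C \<subseteq> {1..n} \<times> {1..n-1} \<and> w \<le> card (forced_pairs n C)" if "C \<in> W" for C
    using that forced_pairs_subset by (simp add: W_def)
  ultimately obtain p where p: "restriction n p" "card (restr_dom p) \<le> s"
    "20 ^ s * card {C \<in> W. \<not> hits (forced_pairs n) p C} \<le> 19 ^ s * card W"
    using greedy_restriction[of W "forced_pairs n" n w s] n by auto
  define m where "m = card (free_leaves n p)"
  have "m = n - card (restr_dom p)" using card_free_leaves[OF p(1)] by (simp add: m_def)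
  then have m: "39 * n \<le> 40 * m" "m \<le> n" using p(2) \<open>40 * s \<le> n\<close> by linarith+
  then obtain C where C: "C \<in> set R" "\<not> hits (forced_pairs n) p C"
    "2 * m * m \<le> 9 * card (forced_pairs n C) + 6 * m"
    using refutation_wide_unhit_clause[OF _ p(1) R] n unfolding m_def by fastforce
  have "w \<le> card (forced_pairs n C)"
  proof -
    have "(39 * n) * (39 * n) \<le> (40 * m) * (40 * m)" using mult_le_mono[OF m(1) m(1)] .
    then have "1521 * (n * n) \<le> 1600 * (m * m)" by (simp add: algebra_simps)
    moreover have "80 * n \<le> n * n" using mult_le_mono1[OF n, of n] .
    moreover have "10 * w \<le> n * n + 10" by (simp add: w_def)
    moreover have "2 * m * m = 2 * (m * m)" by simp
    ultimately show ?thesis using C(3) m(2) n by linarith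
  qed
  then have "C \<in> {C \<in> W. \<not> hits (forced_pairs n) p C}" using C by (simp add: W_def)
  moreover have "finite {C \<in> W. \<not> hits (forced_pairs n) p C}" by (simp add: W_def)
  ultimately have "1 \<le> card {C \<in> W. \<not> hits (forced_pairs n) p C}"
    by (simp add: Suc_le_eq card_gt_0_iff) blast
  then have "20 ^ s \<le> 20 ^ s * card {C \<in> W. \<not> hits (forced_pairs n) p C}" by simp
  also have "\<dots> \<le> 19 ^ s * card W" by (rule p(3))
  also have "card W \<le> card (set R)" by (rule card_mono) (auto simp: W_def)
  then have "19 ^ s * card W \<le> 19 ^ s * length R" using card_length[of R] by simp
  finally show ?thesis unfolding s_def .
qed

theorem theorem6:
  shows "\<exists>c::real > 1. \<exists>N::nat. \<forall>n \<ge> N. \<forall>R.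
           refutation (MAP1_cnf n) R \<longrightarrow> c ^ n \<le> real (length R)"
proof (intro exI[of _ "(20/19::real) powr (1/80)"] conjI exI[of _ "80::nat"] allI impI)
  show "1 < (20/19::real) powr (1/80)" by simp
  fix n :: nat and R
  assume n: "80 \<le> n" and R: "refutation (MAP1_cnf n) R"
  define s where "s = n div 40"
  have "real (20 ^ s) \<le> real (19 ^ s * length R)"
    using MAP1_refutation_length_ge[OF n R] unfolding s_def of_nat_le_iff .
  then have bound: "(20/19::real) ^ s \<le> real (length R)"
    by (simp add: power_divide divide_le_eq mult.commute)
  have "real n / 80 \<le> real s" using n by (simp add: s_def)
  have "((20/19::real) powr (1/80)) ^ n = (20/19::real) powr (real n / 80)"
    by (simp add: powr_powr flip: powr_realpow)
  also have "\<dots> \<le> (20/19::real) powr (real s)"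
    using \<open>real n / 80 \<le> real s\<close> by (intro powr_mono) auto
  also have "\<dots> = (20/19::real) ^ s" by (simp add: powr_realpow)
  finally show "((20/19::real) powr (1/80)) ^ n \<le> real (length R)" using bound by linarith
qed

end
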